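(* Let $g_0=dr^2+f(r)^2d\theta^2$ be a smooth rotationally symmetric metric on $M=\mathbb{S}^1\times[-\rho,\rho]$ with $A_{g_0}(M)=1$, $R_{g_0}>0$, $k_{g_0}\le0$ on $\partial M$, with $k_{g_0}$ constant on each boundary component and $k_{g_0}<0$ on at least one boundary component. Assume that for every time the minimum over $M$ of the scalar curvature is attained on both components of $\partial M$. Then there is a constant $c_2>0$ such that the normalised flow $g(t)$ starting at $g_0$ satisfies, for all $t\ge0$, $$\max_M R(\cdot,t)\ge\frac{2}{t+c_2}.$$
   Context: $R$ denotes scalar curvature (twice the Gauss curvature), $k_g$ the geodesic curvature of $\partial M$ w.r.t. the outward normal. The unnormalised flow solves $\partial_{\tilde t}\tilde g=-\tilde R\tilde g$, $k_{\tilde g}=k_{g_0}$ on $\partial M$, $\tilde g(0)=g_0$; it exists for all time for such data. The normalised flow is $g=\phi\tilde g$ with $\phi(\tilde t)$ chosen so that $A_g(M)=1$, reparametrised by $t=\int_0^{\tilde t}\phi(\tau)d\tau$; it solves $\partial_t g=(r-R)g$, $k_g=k_{g_0}/\sqrt{\phi}$ on $\partial M$, $g(0)=g_0$, with $r=\int_M R\,dA_g$. Rotational symmetry is preserved by the flow, so $R$ is constant on each boundary circle. *)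

theory Defs
  imports "HOL-Analysis.Analysis"
begin

text \<open>Rotationally symmetric metrics on the annulus S^1 x [-rho,rho], written in
coordinates (r,theta) as  E(r) dr^2 + G(r) dtheta^2  with E, G > 0 depending only on r.\<close>

text \<open>A real function is smooth (C-infinity), on all of R.  Smooth functions on the
closed interval are identified with restrictions of smooth functions on R.\<close>
definition smooth_fun :: "(real \<Rightarrow> real) \<Rightarrow> bool" where
  "smooth_fun f \<longleftrightarrow> (\<forall>k x. ((deriv ^^ k) f) differentiable (at x))"

definition rs_scalar :: "(real \<Rightarrow> real) \<Rightarrow> (real \<Rightarrow> real) \<Rightarrow> real \<Rightarrow> real" where
  "rs_scalar E G r =
     - 2 / sqrt (E r * G r) * deriv (\<lambda>s. deriv (\<lambda>x. sqrt (G x)) s / sqrt (E s)) r"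

definition rs_area :: "(real \<Rightarrow> real) \<Rightarrow> (real \<Rightarrow> real) \<Rightarrow> real \<Rightarrow> real \<Rightarrow> real" where
  "rs_area E G a b = 2 * pi * integral {a..b} (\<lambda>r. sqrt (E r * G r))"

definition rs_total_scalar :: "(real \<Rightarrow> real) \<Rightarrow> (real \<Rightarrow> real) \<Rightarrow> real \<Rightarrow> real \<Rightarrow> real" where
  "rs_total_scalar E G a b =
     2 * pi * integral {a..b} (\<lambda>r. rs_scalar E G r * sqrt (E r * G r))"

text \<open>Geodesic curvature of the circle {r = c}, with respect to the unit normal
pointing in the direction of increasing r (outward at the right boundary r = rho);
at the left boundary r = -rho the outward normal is the opposite one.\<close>
definition rs_geod_curv_up :: "(real \<Rightarrow> real) \<Rightarrow> (real \<Rightarrow> real) \<Rightarrow> real \<Rightarrow> real" where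
  "rs_geod_curv_up E G c = deriv (\<lambda>x. sqrt (G x)) c / (sqrt (E c) * sqrt (G c))"

definition rs_bdry_k_right :: "real \<Rightarrow> (real \<Rightarrow> real) \<Rightarrow> (real \<Rightarrow> real) \<Rightarrow> real" where
  "rs_bdry_k_right \<rho> E G = rs_geod_curv_up E G \<rho>"

definition rs_bdry_k_left :: "real \<Rightarrow> (real \<Rightarrow> real) \<Rightarrow> (real \<Rightarrow> real) \<Rightarrow> real" where
  "rs_bdry_k_left \<rho> E G = - rs_geod_curv_up E G (- \<rho>)"

text \<open>Initial metric g0 = dr^2 + f(r)^2 dtheta^2 and the metric g(t) = u(.,t) g0.
(The normalised flow moves g by pointwise scalings, so g(t) is conformal to g0,
and rotational symmetry is preserved, so u depends only on r and t.)\<close>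
definition E0 :: "real \<Rightarrow> real" where "E0 = (\<lambda>r. 1)"
definition G0 :: "(real \<Rightarrow> real) \<Rightarrow> real \<Rightarrow> real" where "G0 f = (\<lambda>r. (f r)\<^sup>2)"
definition Et :: "(real \<Rightarrow> real \<Rightarrow> real) \<Rightarrow> real \<Rightarrow> real \<Rightarrow> real" where
  "Et u t = (\<lambda>r. u r t)"
definition Gt :: "(real \<Rightarrow> real) \<Rightarrow> (real \<Rightarrow> real \<Rightarrow> real) \<Rightarrow> real \<Rightarrow> real \<Rightarrow> real" where
  "Gt f u t = (\<lambda>r. u r t * (f r)\<^sup>2)"

definition Rflow :: "(real \<Rightarrow> real) \<Rightarrow> (real \<Rightarrow> real \<Rightarrow> real) \<Rightarrow> real \<Rightarrow> real \<Rightarrow> real" where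
  "Rflow f u r t = rs_scalar (Et u t) (Gt f u t) r"
definition rbar :: "real \<Rightarrow> (real \<Rightarrow> real) \<Rightarrow> (real \<Rightarrow> real \<Rightarrow> real) \<Rightarrow> real \<Rightarrow> real" where
  "rbar \<rho> f u t = rs_total_scalar (Et u t) (Gt f u t) (-\<rho>) \<rho>"

text \<open>phi(t) in the normalised time variable: from g = phi g~ and dt = phi dt~ one gets
d phi/dt = r(t) phi, phi(0) = 1 (since A_{g0} = 1), hence phi(t) = exp(int_0^t r).\<close>
definition phi_norm :: "real \<Rightarrow> (real \<Rightarrow> real) \<Rightarrow> (real \<Rightarrow> real \<Rightarrow> real) \<Rightarrow> real \<Rightarrow> real" where
  "phi_norm \<rho> f u t = exp (integral {0..t} (rbar \<rho> f u))"

definition normalised_flow :: "real \<Rightarrow> (real \<Rightarrow> real) \<Rightarrow> (real \<Rightarrow> real \<Rightarrow> real) \<Rightarrow> bool" where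
  "normalised_flow \<rho> f u \<longleftrightarrow>
     (\<forall>r\<in>{-\<rho>..\<rho>}. u r 0 = 1) \<and>
     (\<forall>t\<ge>0. \<forall>r\<in>{-\<rho>..\<rho>}. u r t > 0) \<and>
     (\<forall>t\<ge>0. \<forall>x. (\<lambda>r. u r t) differentiable (at x) \<and>
                  deriv (\<lambda>r. u r t) differentiable (at x)) \<and>
     continuous_on ({-\<rho>..\<rho>} \<times> {0..}) (\<lambda>(r,t). u r t) \<and>
     continuous_on ({-\<rho>..\<rho>} \<times> {0..}) (\<lambda>(r,t). deriv (\<lambda>x. u x t) r) \<and>
     continuous_on ({-\<rho>..\<rho>} \<times> {0..}) (\<lambda>(r,t). deriv (deriv (\<lambda>x. u x t)) r) \<and>
     (\<forall>r\<in>{-\<rho>..\<rho>}. \<forall>t\<ge>0.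
        ((\<lambda>s. u r s) has_real_derivative ((rbar \<rho> f u t - Rflow f u r t) * u r t))
          (at t within {0..})) \<and>
     (\<forall>t\<ge>0.
        rs_bdry_k_right \<rho> (Et u t) (Gt f u t)
          = rs_bdry_k_right \<rho> E0 (G0 f) / sqrt (phi_norm \<rho> f u t) \<and>
        rs_bdry_k_left \<rho> (Et u t) (Gt f u t)
          = rs_bdry_k_left \<rho> E0 (G0 f) / sqrt (phi_norm \<rho> f u t))"

end

theory Submission
  imports Defs
begin

text \<open>Write g(t) = u (dr^2 + f^2 d\<theta>^2) and H = (\<surd>G)'/\<surd>E, so that R dA = -4\<pi> H' dr.
  Gauss-Bonnet gives r(t) = -4\<pi>(H(\<rho>) - H(-\<rho>)), and the boundary condition turns this into
  r = C \<surd>(u(\<rho>)/\<phi>) with C > 0, once u(\<rho>) = u(-\<rho>); the latter holds because R takes the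
  same (minimal) value on both boundary circles. Along the flow \<phi>/u(\<rho>) grows at the rate
  R(\<rho>) = min R \<le> r, so z = \<surd>(\<phi>/u(\<rho>)) satisfies z' \<le> r z/2 = C/2, i.e. z \<le> 1 + Ct/2.
  Hence max R \<ge> r = C/z \<ge> 2/(t + 2/C).\<close>

lemma DERIV_nonneg_within_imp_le:
  fixes g g' :: "real \<Rightarrow> real"
  assumes "a \<le> b"
    and "\<And>x. x \<in> {a..b} \<Longrightarrow> (g has_real_derivative g' x) (at x within {a..b})"
    and "\<And>x. x \<in> {a..b} \<Longrightarrow> g' x \<ge> 0"
  shows "g a \<le> g b"
proof (rule DERIV_nonneg_imp_increasing_open[OF assms(1)])
  show "continuous_on {a..b} g"
    using assms(2) DERIV_continuous continuous_on_eq_continuous_within by blast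
  fix x assume "a < x" "x < b"
  then show "\<exists>y. DERIV g x :> y \<and> 0 \<le> y"
    using assms(2)[of x] assms(3)[of x] at_within_Icc_at[of a x b] by auto
qed

lemma DERIV_le_within_imp_linear_bound:
  fixes z z' :: "real \<Rightarrow> real"
  assumes "\<tau> \<ge> 0"
    and "\<And>s. s \<in> {0..\<tau>} \<Longrightarrow> (z has_real_derivative z' s) (at s within {0..\<tau>})"
    and "\<And>s. s \<in> {0..\<tau>} \<Longrightarrow> z' s \<le> c"
  shows "z \<tau> \<le> z 0 + c * \<tau>"
proof -
  have "(\<lambda>s. c * s - z s) 0 \<le> (\<lambda>s. c * s - z s) \<tau>"
  proof (rule DERIV_nonneg_within_imp_le[where g = "\<lambda>s. c * s - z s" and g' = "\<lambda>s. c - z' s"])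
    fix s assume s: "s \<in> {0..\<tau>}"
    show "((\<lambda>s. c * s - z s) has_real_derivative c - z' s) (at s within {0..\<tau>})"
      using DERIV_diff[OF DERIV_cmult[OF DERIV_ident, of c] assms(2)[OF s]] by simp
    show "0 \<le> c - z' s" using assms(3)[OF s] by simp
  qed (use assms(1) in auto)
  then show ?thesis by (simp add: algebra_simps)
qed

lemma DERIV_zero_within_imp_eq:
  fixes g :: "real \<Rightarrow> real"
  assumes "\<And>x. x \<in> {a..b} \<Longrightarrow> (g has_real_derivative 0) (at x within {a..b})"
    and "x \<in> {a..b}" "y \<in> {a..b}"
  shows "g x = g y"
  using has_field_derivative_zero_constant[of "{a..b}" g] assms by force

lemma affine_ode_fixed_point:
  fixes A r :: "real \<Rightarrow> real"
  assumes r_cont: "continuous_on {0..\<tau>} r" and A0: "A 0 = 1"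
    and dA: "\<And>s. s \<in> {0..\<tau>} \<Longrightarrow> (A has_real_derivative r s * (A s - 1)) (at s within {0..\<tau>})"
    and s: "s \<in> {0..\<tau>}"
  shows "A s = 1"
proof -
  define F where "F s = integral {0..s} r" for s
  have dF: "(F has_real_derivative r x) (at x within {0..\<tau>})" if "x \<in> {0..\<tau>}" for x
    using integral_has_vector_derivative[OF r_cont that]
    unfolding has_real_derivative_iff_has_vector_derivative F_def[abs_def] .
  have "(\<lambda>s. (A s - 1) * exp (- F s)) s = (\<lambda>s. (A s - 1) * exp (- F s)) 0"
  proof (rule DERIV_zero_within_imp_eq[where g = "\<lambda>s. (A s - 1) * exp (- F s)"])
    fix x assume x: "x \<in> {0..\<tau>}"
    have "((\<lambda>s. (A s - 1) * exp (- F s)) has_real_derivative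
        (r x * (A x - 1) - 0) * exp (- F x) + exp (- F x) * (- r x) * (A x - 1)) (at x within {0..\<tau>})"
      by (rule DERIV_mult[OF DERIV_diff[OF dA[OF x] DERIV_const]
          DERIV_exp[THEN DERIV_chain2, OF DERIV_minus[OF dF[OF x]]]])
    then show "((\<lambda>s. (A s - 1) * exp (- F s)) has_real_derivative 0) (at x within {0..\<tau>})"
      by (simp add: algebra_simps)
  qed (use s in auto)
  then show ?thesis using A0 by simp
qed

lemma continuous_on_slice_fst:
  fixes g :: "'a::topological_space \<Rightarrow> 'b::topological_space \<Rightarrow> 'c::topological_space"
  assumes "continuous_on (I \<times> T) (\<lambda>(r, t). g r t)" "r0 \<in> I"
  shows "continuous_on T (\<lambda>t. g r0 t)"
proof -
  have "continuous_on T (\<lambda>t. (\<lambda>(r, t). g r t) (r0, t))"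
    by (rule continuous_on_compose2[OF assms(1)]) (auto intro!: continuous_intros simp: assms(2))
  then show ?thesis by simp
qed

lemma continuous_on_slice_snd:
  fixes g :: "'a::topological_space \<Rightarrow> 'b::topological_space \<Rightarrow> 'c::topological_space"
  assumes "continuous_on (I \<times> T) (\<lambda>(r, t). g r t)" "t0 \<in> T"
  shows "continuous_on I (\<lambda>r. g r t0)"
proof -
  have "continuous_on I (\<lambda>r. (\<lambda>(r, t). g r t) (r, t0))"
    by (rule continuous_on_compose2[OF assms(1)]) (auto intro!: continuous_intros simp: assms(2))
  then show ?thesis by simp
qed

lemma continuous_on_swap_subset:
  fixes g :: "'a::topological_space \<Rightarrow> 'b::topological_space \<Rightarrow> 'c::topological_space"
  assumes "continuous_on (I \<times> T) (\<lambda>(r, t). g r t)" "J \<subseteq> T"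
  shows "continuous_on (J \<times> I) (\<lambda>(s, r). g r s)"
proof -
  have "continuous_on (J \<times> I) (\<lambda>p. (\<lambda>(r, t). g r t) (snd p, fst p))"
    by (rule continuous_on_compose2[OF assms(1)]) (use assms(2) in \<open>auto intro!: continuous_intros\<close>)
  then show ?thesis by (simp add: case_prod_beta)
qed

section \<open>Curvature of a conformally scaled rotationally symmetric metric\<close>

text \<open>For E = U and G = U f^2, \<open>rs_flux U f\<close> is the quantity (\<surd>G)'/\<surd>E differentiated in
  \<open>rs_scalar\<close>.\<close>

definition rs_flux :: "(real \<Rightarrow> real) \<Rightarrow> (real \<Rightarrow> real) \<Rightarrow> real \<Rightarrow> real" where
  "rs_flux U f y = deriv U y * f y / (2 * U y) + deriv f y"

definition rs_flux_deriv :: "(real \<Rightarrow> real) \<Rightarrow> (real \<Rightarrow> real) \<Rightarrow> real \<Rightarrow> real" where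
  "rs_flux_deriv U f y = (deriv (deriv U) y * f y + deriv U y * deriv f y) / (2 * U y)
     - (deriv U y)\<^sup>2 * f y / (2 * (U y)\<^sup>2) + deriv (deriv f) y"

lemma open_Collect_pos_differentiable:
  fixes U :: "real \<Rightarrow> real"
  assumes "\<And>x. U differentiable (at x)"
  shows "open {x. 0 < U x}"
  using assms
  by (intro open_Collect_less continuous_intros)
     (simp_all add: continuous_at_imp_continuous_on differentiable_imp_continuous_within)

lemma has_real_derivative_sqrt_conformal:
  fixes U f :: "real \<Rightarrow> real"
  assumes dU: "\<And>x. U differentiable (at x)" and df: "\<And>x. f differentiable (at x)"
    and pos: "U y > 0" "f y > 0"
  shows "((\<lambda>x. sqrt (U x * (f x)\<^sup>2)) has_real_derivative
          (deriv U y * f y / (2 * sqrt (U y)) + sqrt (U y) * deriv f y)) (at y)"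
proof -
  have "eventually (\<lambda>x. x \<in> {x. 0 < U x} \<inter> {x. 0 < f x}) (nhds y)"
    using open_Collect_pos_differentiable[OF dU] open_Collect_pos_differentiable[OF df] pos
    by (intro eventually_nhds_in_open) auto
  then have ev: "eventually (\<lambda>x. sqrt (U x) * f x = sqrt (U x * (f x)\<^sup>2)) (nhds y)"
    by eventually_elim (auto simp: real_sqrt_mult)
  have "((\<lambda>x. sqrt (U x) * f x) has_real_derivative
          (deriv U y * f y / (2 * sqrt (U y)) + sqrt (U y) * deriv f y)) (at y)"
    using pos dU[of y] df[of y]
    by (auto intro!: derivative_eq_intros simp: DERIV_deriv_iff_real_differentiable[symmetric] field_simps)
  then show ?thesis using DERIV_cong_ev[OF refl ev refl] by simp
qed

lemma rs_flux_has_derivative: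
  fixes U f :: "real \<Rightarrow> real"
  assumes dU: "\<And>x. U differentiable (at x)" and ddU: "\<And>x. deriv U differentiable (at x)"
    and df: "\<And>x. f differentiable (at x)" and ddf: "\<And>x. deriv f differentiable (at x)"
    and pos: "U y > 0"
  shows "(rs_flux U f has_real_derivative rs_flux_deriv U f y) (at y)"
proof -
  have D: "((\<lambda>y. deriv U y * f y / (2 * U y) + deriv f y) has_real_derivative
     ((deriv (deriv U) y * f y + deriv f y * deriv U y) * (2 * U y) - deriv U y * f y * (2 * deriv U y))
       / (2 * U y * (2 * U y)) + deriv (deriv f) y) (at y)"
    using pos dU[of y] ddU[of y] df[of y] ddf[of y]
    by (intro DERIV_add DERIV_divide DERIV_mult DERIV_cmult)
       (auto simp: DERIV_deriv_iff_real_differentiable[symmetric])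
  moreover have "((deriv (deriv U) y * f y + deriv f y * deriv U y) * (2 * U y)
      - deriv U y * f y * (2 * deriv U y)) / (2 * U y * (2 * U y)) + deriv (deriv f) y
      = rs_flux_deriv U f y"
    unfolding rs_flux_deriv_def using pos by (simp add: field_simps power2_eq_square)
  ultimately show ?thesis by (simp add: rs_flux_def[abs_def])
qed

lemma rs_curvatures_conformal:
  fixes U f :: "real \<Rightarrow> real"
  assumes dU: "\<And>x. U differentiable (at x)" and ddU: "\<And>x. deriv U differentiable (at x)"
    and df: "\<And>x. f differentiable (at x)" and ddf: "\<And>x. deriv f differentiable (at x)"
    and pos: "U y > 0" "f y > 0"
  shows "rs_scalar U (\<lambda>r. U r * (f r)\<^sup>2) y = -2 / (U y * f y) * rs_flux_deriv U f y"
    and "rs_geod_curv_up U (\<lambda>r. U r * (f r)\<^sup>2) y = rs_flux U f y / (sqrt (U y) * f y)"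
proof -
  have eq: "deriv (\<lambda>x. sqrt (U x * (f x)\<^sup>2)) z / sqrt (U z) = rs_flux U f z"
    if "z \<in> {x. 0 < U x} \<inter> {x. 0 < f x}" for z
  proof -
    have "deriv (\<lambda>x. sqrt (U x * (f x)\<^sup>2)) z
        = deriv U z * f z / (2 * sqrt (U z)) + sqrt (U z) * deriv f z"
      using has_real_derivative_sqrt_conformal[OF dU df, of z] that by (auto intro: DERIV_imp_deriv)
    moreover have "sqrt (U z) * sqrt (U z) = U z" "sqrt (U z) > 0" using that by auto
    moreover have "(deriv U z * f z / (2 * sqrt (U z)) + sqrt (U z) * deriv f z) / sqrt (U z)
       = deriv U z * f z / (2 * (sqrt (U z) * sqrt (U z))) + deriv f z"
      using \<open>sqrt (U z) > 0\<close> by (simp add: field_simps)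
    ultimately show ?thesis unfolding rs_flux_def by simp
  qed
  have "eventually (\<lambda>z. z \<in> {x. 0 < U x} \<inter> {x. 0 < f x}) (nhds y)"
    using open_Collect_pos_differentiable[OF dU] open_Collect_pos_differentiable[OF df] pos
    by (intro eventually_nhds_in_open) auto
  then have ev: "eventually (\<lambda>z. deriv (\<lambda>x. sqrt (U x * (f x)\<^sup>2)) z / sqrt (U z) = rs_flux U f z)
      (nhds y)"
    by (rule eventually_mono) (rule eq)
  have "((\<lambda>z. deriv (\<lambda>x. sqrt (U x * (f x)\<^sup>2)) z / sqrt (U z)) has_real_derivative
      rs_flux_deriv U f y) (at y)"
    using DERIV_cong_ev[OF refl ev refl] rs_flux_has_derivative[OF dU ddU df ddf pos(1)] by simp
  then have "deriv (\<lambda>z. deriv (\<lambda>x. sqrt (U x * (f x)\<^sup>2)) z / sqrt (U z)) y = rs_flux_deriv U f y"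
    by (rule DERIV_imp_deriv)
  moreover have "sqrt (U y * (U y * (f y)\<^sup>2)) = U y * f y"
    using pos by (simp add: real_sqrt_mult power2_eq_square[symmetric] del: real_sqrt_mult_self)
  ultimately show "rs_scalar U (\<lambda>r. U r * (f r)\<^sup>2) y = -2 / (U y * f y) * rs_flux_deriv U f y"
    unfolding rs_scalar_def by simp
  have "deriv (\<lambda>x. sqrt (U x * (f x)\<^sup>2)) y = rs_flux U f y * sqrt (U y)"
    using eq[of y] pos by (simp add: field_simps)
  then show "rs_geod_curv_up U (\<lambda>r. U r * (f r)\<^sup>2) y = rs_flux U f y / (sqrt (U y) * f y)"
    unfolding rs_geod_curv_up_def using pos by (simp add: field_simps real_sqrt_mult)
qed

lemma rs_total_scalar_conformal:
  fixes U f :: "real \<Rightarrow> real"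
  assumes dU: "\<And>x. U differentiable (at x)" and ddU: "\<And>x. deriv U differentiable (at x)"
    and df: "\<And>x. f differentiable (at x)" and ddf: "\<And>x. deriv f differentiable (at x)"
    and pos: "\<And>y. y \<in> {a..b} \<Longrightarrow> U y > 0 \<and> f y > 0" and "a \<le> b"
  shows "rs_total_scalar U (\<lambda>r. U r * (f r)\<^sup>2) a b = -4 * pi * (rs_flux U f b - rs_flux U f a)"
proof -
  have "integral {a..b} (\<lambda>r. rs_scalar U (\<lambda>r. U r * (f r)\<^sup>2) r * sqrt (U r * (U r * (f r)\<^sup>2)))
      = integral {a..b} (\<lambda>r. -2 * rs_flux_deriv U f r)"
  proof (rule integral_cong)
    fix y assume y: "y \<in> {a..b}"
    have "sqrt (U y * (U y * (f y)\<^sup>2)) = U y * f y"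
      using pos[OF y] by (simp add: real_sqrt_mult power2_eq_square[symmetric] del: real_sqrt_mult_self)
    then show "rs_scalar U (\<lambda>r. U r * (f r)\<^sup>2) y * sqrt (U y * (U y * (f y)\<^sup>2))
        = -2 * rs_flux_deriv U f y"
      using rs_curvatures_conformal(1)[OF dU ddU df ddf] pos[OF y] by simp
  qed
  also have "\<dots> = -2 * (rs_flux U f b - rs_flux U f a)"
  proof -
    have "(rs_flux_deriv U f has_integral (rs_flux U f b - rs_flux U f a)) {a..b}"
      using rs_flux_has_derivative[OF dU ddU df ddf] pos \<open>a \<le> b\<close>
      by (intro fundamental_theorem_of_calculus)
         (auto simp: has_real_derivative_iff_has_vector_derivative[symmetric] intro: DERIV_subset)
    then show ?thesis by (simp add: integral_unique)
  qed
  finally have "integral {a..b} (\<lambda>r. rs_scalar U (\<lambda>r. U r * (f r)\<^sup>2) r * sqrt (U r * (U r * (f r)\<^sup>2)))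
      = -2 * (rs_flux U f b - rs_flux U f a)" .
  then show ?thesis
    unfolding rs_total_scalar_def by (simp only:)
qed

section \<open>The normalised flow\<close>

locale rs_normalised_flow =
  fixes \<rho> :: real and f :: "real \<Rightarrow> real" and u :: "real \<Rightarrow> real \<Rightarrow> real"
  assumes rho_pos: "\<rho> > 0"
    and f_smooth: "smooth_fun f"
    and f_pos: "\<forall>r\<in>{-\<rho>..\<rho>}. f r > 0"
    and area1: "rs_area E0 (G0 f) (-\<rho>) \<rho> = 1"
    and flow: "normalised_flow \<rho> f u"
begin

definition flow_area :: "real \<Rightarrow> real" where
  "flow_area t = 2 * pi * integral {-\<rho>..\<rho>} (\<lambda>r. u r t * f r)"

lemma boundary_mem: "\<rho> \<in> {-\<rho>..\<rho>}" "-\<rho> \<in> {-\<rho>..\<rho>}"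
  using rho_pos by auto

lemma f_differentiable:
  "f differentiable (at x)" "deriv f differentiable (at x)" "deriv (deriv f) differentiable (at x)"
proof -
  have "(deriv ^^ k) f differentiable (at x)" for k
    using f_smooth unfolding smooth_fun_def by blast
  from this[of 0] this[of 1] this[of 2]
  show "f differentiable (at x)" "deriv f differentiable (at x)"
    "deriv (deriv f) differentiable (at x)"
    by (simp_all add: numeral_2_eq_2)
qed

lemma f_pos_at: "r \<in> {-\<rho>..\<rho>} \<Longrightarrow> f r > 0"
  using f_pos by blast

lemma f_continuous:
  "continuous_on S f" "continuous_on S (deriv f)" "continuous_on S (deriv (deriv f))"
  using f_differentiable
  by (simp_all add: continuous_at_imp_continuous_on differentiable_imp_continuous_within)

lemma u_init: "r \<in> {-\<rho>..\<rho>} \<Longrightarrow> u r 0 = 1"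
  and u_pos: "t \<ge> 0 \<Longrightarrow> r \<in> {-\<rho>..\<rho>} \<Longrightarrow> u r t > 0"
  and u_differentiable: "t \<ge> 0 \<Longrightarrow> (\<lambda>r. u r t) differentiable (at x)"
  and u_deriv_differentiable: "t \<ge> 0 \<Longrightarrow> deriv (\<lambda>r. u r t) differentiable (at x)"
  and u_continuous: "continuous_on ({-\<rho>..\<rho>} \<times> {0..}) (\<lambda>(r, t). u r t)"
  and u_deriv_continuous: "continuous_on ({-\<rho>..\<rho>} \<times> {0..}) (\<lambda>(r, t). deriv (\<lambda>x. u x t) r)"
  and u_deriv2_continuous:
    "continuous_on ({-\<rho>..\<rho>} \<times> {0..}) (\<lambda>(r, t). deriv (deriv (\<lambda>x. u x t)) r)"
  and u_time_derivative: "r \<in> {-\<rho>..\<rho>} \<Longrightarrow> t \<ge> 0 \<Longrightarrow>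
    ((\<lambda>s. u r s) has_real_derivative ((rbar \<rho> f u t - Rflow f u r t) * u r t)) (at t within {0..})"
  and boundary_condition: "t \<ge> 0 \<Longrightarrow>
    rs_bdry_k_right \<rho> (Et u t) (Gt f u t) = rs_bdry_k_right \<rho> E0 (G0 f) / sqrt (phi_norm \<rho> f u t) \<and>
    rs_bdry_k_left \<rho> (Et u t) (Gt f u t) = rs_bdry_k_left \<rho> E0 (G0 f) / sqrt (phi_norm \<rho> f u t)"
  using flow unfolding normalised_flow_def by auto

lemma phi_norm_pos: "phi_norm \<rho> f u t > 0"
  by (simp add: phi_norm_def)

lemma Rflow_eq:
  assumes "t \<ge> 0" "r \<in> {-\<rho>..\<rho>}"
  shows "Rflow f u r t = -2 / (u r t * f r) * rs_flux_deriv (\<lambda>x. u x t) f r"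
  using rs_curvatures_conformal(1)[OF u_differentiable u_deriv_differentiable f_differentiable(1,2)]
    u_pos[OF assms] f_pos_at assms
  unfolding Rflow_def Et_def Gt_def by simp

lemma geod_curv_eq:
  assumes "t \<ge> 0" "r \<in> {-\<rho>..\<rho>}"
  shows "rs_geod_curv_up (Et u t) (Gt f u t) r = rs_flux (\<lambda>x. u x t) f r / (sqrt (u r t) * f r)"
  using rs_curvatures_conformal(2)[OF u_differentiable u_deriv_differentiable f_differentiable(1,2)]
    u_pos[OF assms] f_pos_at assms
  unfolding Et_def Gt_def by simp

lemma geod_curv_init:
  assumes "r \<in> {-\<rho>..\<rho>}"
  shows "rs_geod_curv_up E0 (G0 f) r = deriv f r / f r"
proof -
  have "rs_geod_curv_up (\<lambda>x. 1) (\<lambda>r. 1 * (f r)\<^sup>2) r = rs_flux (\<lambda>x. 1) f r / (sqrt 1 * f r)"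
    using f_pos_at assms by (intro rs_curvatures_conformal(2)) (auto simp: f_differentiable)
  then show ?thesis by (simp add: E0_def G0_def rs_flux_def)
qed

lemma flux_boundary:
  assumes "t \<ge> 0"
  shows "rs_flux (\<lambda>x. u x t) f \<rho> = deriv f \<rho> * sqrt (u \<rho> t) / sqrt (phi_norm \<rho> f u t)"
    and "rs_flux (\<lambda>x. u x t) f (-\<rho>) = deriv f (-\<rho>) * sqrt (u (-\<rho>) t) / sqrt (phi_norm \<rho> f u t)"
proof -
  have "rs_flux (\<lambda>x. u x t) f r = deriv f r * sqrt (u r t) / sqrt (phi_norm \<rho> f u t)"
    if r: "r \<in> {\<rho>, -\<rho>}" for r
  proof -
    have "rs_flux (\<lambda>x. u x t) f r / (sqrt (u r t) * f r) = deriv f r / f r / sqrt (phi_norm \<rho> f u t)"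
      using r boundary_condition[OF assms] geod_curv_eq[OF assms] geod_curv_init boundary_mem
      by (auto simp: rs_bdry_k_left_def rs_bdry_k_right_def)
    moreover have "sqrt (u r t) > 0" "f r > 0" "sqrt (phi_norm \<rho> f u t) > 0"
      using r boundary_mem u_pos[OF assms] f_pos_at phi_norm_pos by auto
    ultimately show ?thesis by (simp add: field_simps)
  qed
  then show "rs_flux (\<lambda>x. u x t) f \<rho> = deriv f \<rho> * sqrt (u \<rho> t) / sqrt (phi_norm \<rho> f u t)"
    and "rs_flux (\<lambda>x. u x t) f (-\<rho>) = deriv f (-\<rho>) * sqrt (u (-\<rho>) t) / sqrt (phi_norm \<rho> f u t)"
    by auto
qed

lemma rbar_eq_flux:
  assumes "t \<ge> 0"
  shows "rbar \<rho> f u t = -4 * pi * (rs_flux (\<lambda>x. u x t) f \<rho> - rs_flux (\<lambda>x. u x t) f (-\<rho>))"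
  using rs_total_scalar_conformal[OF u_differentiable u_deriv_differentiable f_differentiable(1,2)]
    u_pos[OF assms] f_pos_at assms rho_pos
  unfolding rbar_def Et_def Gt_def by simp

lemma rbar_eq_integral:
  assumes "t \<ge> 0"
  shows "rbar \<rho> f u t = 2 * pi * integral {-\<rho>..\<rho>} (\<lambda>r. Rflow f u r t * (u r t * f r))"
proof -
  have "sqrt (Et u t r * Gt f u t r) = u r t * f r" if "r \<in> {-\<rho>..\<rho>}" for r
  proof -
    have "Et u t r * Gt f u t r = (u r t * f r)\<^sup>2" by (simp add: Et_def Gt_def power2_eq_square)
    then show ?thesis using u_pos[OF assms that] f_pos_at[OF that] by simp
  qed
  then show ?thesis
    unfolding rbar_def rs_total_scalar_def Rflow_def by (metis (no_types, lifting) integral_cong)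
qed

lemma rbar_continuous: "continuous_on {0..} (rbar \<rho> f u)"
proof -
  have "continuous_on {0..} (\<lambda>t. rs_flux (\<lambda>x. u x t) f r)" if "r \<in> {-\<rho>..\<rho>}" for r
    using continuous_on_slice_fst[OF u_deriv_continuous that]
      continuous_on_slice_fst[OF u_continuous that] u_pos[OF _ that]
    unfolding rs_flux_def by (auto intro!: continuous_intros) (metis less_irrefl)
  then have "continuous_on {0..}
      (\<lambda>t. -4 * pi * (rs_flux (\<lambda>x. u x t) f \<rho> - rs_flux (\<lambda>x. u x t) f (-\<rho>)))"
    using boundary_mem by (auto intro!: continuous_intros)
  then show ?thesis by (rule continuous_on_eq) (use rbar_eq_flux in auto)
qed

lemma Rflow_continuous: "continuous_on ({-\<rho>..\<rho>} \<times> {0..}) (\<lambda>(r, t). Rflow f u r t)"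
proof -
  let ?S = "{-\<rho>..\<rho>} \<times> {0::real..}"
  have cu: "continuous_on ?S (\<lambda>p. u (fst p) (snd p))"
    and cD1: "continuous_on ?S (\<lambda>p. deriv (\<lambda>x. u x (snd p)) (fst p))"
    and cD2: "continuous_on ?S (\<lambda>p. deriv (deriv (\<lambda>x. u x (snd p))) (fst p))"
    using u_continuous u_deriv_continuous u_deriv2_continuous by (simp_all add: case_prod_beta)
  have cf: "continuous_on ?S (\<lambda>p. f (fst p))" "continuous_on ?S (\<lambda>p. deriv f (fst p))"
    "continuous_on ?S (\<lambda>p. deriv (deriv f) (fst p))"
    by (auto intro!: continuous_on_compose2[OF f_continuous(1)] continuous_on_compose2[OF f_continuous(2)]
        continuous_on_compose2[OF f_continuous(3)] continuous_intros)
  have "u r t \<noteq> 0" "f r \<noteq> 0" if "(r, t) \<in> ?S" for r t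
    using u_pos f_pos_at that by (metis SigmaE2 atLeast_iff less_irrefl)+
  then have "continuous_on ?S
      (\<lambda>p. -2 / (u (fst p) (snd p) * f (fst p)) * rs_flux_deriv (\<lambda>x. u x (snd p)) f (fst p))"
    unfolding rs_flux_deriv_def by (intro continuous_intros cu cD1 cD2 cf) auto
  then show ?thesis
    by (rule continuous_on_eq) (auto simp: Rflow_eq)
qed

lemma phi_norm_has_derivative:
  assumes "s \<in> {0..\<tau>}"
  shows "(phi_norm \<rho> f u has_real_derivative rbar \<rho> f u s * phi_norm \<rho> f u s) (at s within {0..\<tau>})"
proof -
  have "((\<lambda>s. integral {0..s} (rbar \<rho> f u)) has_real_derivative rbar \<rho> f u s) (at s within {0..\<tau>})"
    using integral_has_vector_derivative[OF continuous_on_subset[OF rbar_continuous] assms]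
    by (simp add: has_real_derivative_iff_has_vector_derivative)
  from DERIV_exp[THEN DERIV_chain2, OF this] show ?thesis
    by (simp add: phi_norm_def[abs_def] mult.commute)
qed

lemma area_density_continuous:
  assumes "t \<ge> 0"
  shows "continuous_on {-\<rho>..\<rho>} (\<lambda>r. u r t * f r)"
  using continuous_on_mult[OF continuous_on_slice_snd[OF u_continuous] f_continuous(1)] assms
  by simp

lemma area_integral_has_derivative:
  assumes s: "s \<in> {0..\<tau>}"
  shows "((\<lambda>s. integral {-\<rho>..\<rho>} (\<lambda>r. u r s * f r)) has_real_derivative
      integral {-\<rho>..\<rho>} (\<lambda>r. (rbar \<rho> f u s - Rflow f u r s) * u r s * f r)) (at s within {0..\<tau>})"
proof -
  let ?rb = "rbar \<rho> f u"
  have JT: "{0..\<tau>} \<subseteq> {0..}" by auto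
  have "((\<lambda>s. integral (cbox (-\<rho>) \<rho>) (\<lambda>r. u r s * f r)) has_real_derivative
      integral (cbox (-\<rho>) \<rho>) (\<lambda>r. (?rb s - Rflow f u r s) * u r s * f r)) (at s within {0..\<tau>})"
  proof (rule leibniz_rule_field_derivative[where fx = "\<lambda>s r. (?rb s - Rflow f u r s) * u r s * f r"])
    fix x r assume "x \<in> {0..\<tau>}" "r \<in> cbox (-\<rho>) \<rho>"
    then show "((\<lambda>s. u r s * f r) has_real_derivative (?rb x - Rflow f u r x) * u r x * f r)
        (at x within {0..\<tau>})"
      using DERIV_mult[OF DERIV_subset[OF u_time_derivative JT] DERIV_const[of "f r"]] by simp
  next
    fix x assume "x \<in> {0..\<tau>}"
    then show "(\<lambda>r. u r x * f r) integrable_on cbox (-\<rho>) \<rho>"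
      using area_density_continuous by (simp add: integrable_continuous_interval)
  next
    have "continuous_on ({0..\<tau>} \<times> {-\<rho>..\<rho>}) (\<lambda>p. ?rb (fst p))"
      by (rule continuous_on_compose2[OF continuous_on_subset[OF rbar_continuous JT]])
         (auto intro!: continuous_intros)
    moreover have "continuous_on ({0..\<tau>} \<times> {-\<rho>..\<rho>}) (\<lambda>p. f (snd p))"
      by (rule continuous_on_compose2[OF f_continuous(1)]) (auto intro!: continuous_intros)
    ultimately show "continuous_on ({0..\<tau>} \<times> cbox (-\<rho>) \<rho>)
        (\<lambda>(s, r). (?rb s - Rflow f u r s) * u r s * f r)"
      using continuous_on_swap_subset[OF u_continuous JT] continuous_on_swap_subset[OF Rflow_continuous JT]
      by (auto simp: case_prod_beta intro!: continuous_intros)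
  qed (use s in auto)
  then show ?thesis by simp
qed

lemma flow_area_has_derivative:
  assumes s: "s \<in> {0..\<tau>}"
  shows "(flow_area has_real_derivative rbar \<rho> f u s * (flow_area s - 1)) (at s within {0..\<tau>})"
proof -
  let ?I = "{-\<rho>..\<rho>}" and ?rb = "rbar \<rho> f u"
  have w: "continuous_on ?I (\<lambda>r. u r s * f r)"
    using area_density_continuous s by simp
  have "continuous_on ?I (\<lambda>r. Rflow f u r s * (u r s * f r))"
    using continuous_on_slice_snd[OF Rflow_continuous, of s] w s by (auto intro!: continuous_intros)
  then have "integral ?I (\<lambda>r. ?rb s * (u r s * f r) - Rflow f u r s * (u r s * f r))
      = ?rb s * integral ?I (\<lambda>r. u r s * f r) - integral ?I (\<lambda>r. Rflow f u r s * (u r s * f r))"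
    using integral_diff[OF integrable_cmul[OF integrable_continuous_interval[OF w]]
        integrable_continuous_interval] by simp
  moreover have "integral ?I (\<lambda>r. (?rb s - Rflow f u r s) * u r s * f r)
      = integral ?I (\<lambda>r. ?rb s * (u r s * f r) - Rflow f u r s * (u r s * f r))"
    by (simp add: algebra_simps)
  ultimately have "2 * pi * integral ?I (\<lambda>r. (?rb s - Rflow f u r s) * u r s * f r)
      = ?rb s * (2 * pi * integral ?I (\<lambda>r. u r s * f r))
        - 2 * pi * integral ?I (\<lambda>r. Rflow f u r s * (u r s * f r))"
    by (simp only:) (simp add: algebra_simps)
  also have "\<dots> = ?rb s * (flow_area s - 1)"
    using rbar_eq_integral[of s] s by (simp only: flow_area_def) (simp add: algebra_simps)
  finally show ?thesis
    using DERIV_cmult[OF area_integral_has_derivative[OF s], of "2 * pi"]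
    by (simp add: flow_area_def[abs_def])
qed

lemma flow_area_eq_1:
  assumes "t \<ge> 0"
  shows "flow_area t = 1"
proof (rule affine_ode_fixed_point[where A = flow_area and \<tau> = t and s = t and r = "rbar \<rho> f u"])
  have "integral {-\<rho>..\<rho>} (\<lambda>r. u r 0 * f r) = integral {-\<rho>..\<rho>} (\<lambda>r. sqrt (E0 r * G0 f r))"
    by (rule integral_cong) (use u_init f_pos_at in \<open>force simp: E0_def G0_def\<close>)
  then show "flow_area 0 = 1" using area1 by (simp add: rs_area_def flow_area_def)
qed (use assms rbar_continuous flow_area_has_derivative in \<open>auto intro: continuous_on_subset\<close>)

lemma constant_weighted_average:
  assumes "t \<ge> 0"
  shows "2 * pi * integral {-\<rho>..\<rho>} (\<lambda>r. c * (u r t * f r)) = c"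
  using flow_area_eq_1[OF assms] by (simp add: flow_area_def)

lemma weighted_integrals_le:
  assumes "t \<ge> 0" and le: "\<And>r. r \<in> {-\<rho>..\<rho>} \<Longrightarrow> g r \<le> h r"
    and g: "continuous_on {-\<rho>..\<rho>} g" and h: "continuous_on {-\<rho>..\<rho>} h"
  shows "2 * pi * integral {-\<rho>..\<rho>} (\<lambda>r. g r * (u r t * f r))
      \<le> 2 * pi * integral {-\<rho>..\<rho>} (\<lambda>r. h r * (u r t * f r))"
proof -
  note w = area_density_continuous[OF assms(1)]
  have "integral {-\<rho>..\<rho>} (\<lambda>r. g r * (u r t * f r)) \<le> integral {-\<rho>..\<rho>} (\<lambda>r. h r * (u r t * f r))"
  proof (rule integral_le)
    show "(\<lambda>r. g r * (u r t * f r)) integrable_on {-\<rho>..\<rho>}"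
      "(\<lambda>r. h r * (u r t * f r)) integrable_on {-\<rho>..\<rho>}"
      by (intro integrable_continuous_interval continuous_on_mult g h w)+
    fix r assume r: "r \<in> {-\<rho>..\<rho>}"
    show "g r * (u r t * f r) \<le> h r * (u r t * f r)"
      using u_pos[OF assms(1) r] f_pos_at[OF r] by (intro mult_right_mono le[OF r]) simp
  qed
  then show ?thesis by simp
qed

lemma lower_bound_le_rbar:
  assumes "t \<ge> 0" "\<And>r. r \<in> {-\<rho>..\<rho>} \<Longrightarrow> c \<le> Rflow f u r t"
  shows "c \<le> rbar \<rho> f u t"
proof -
  have "2 * pi * integral {-\<rho>..\<rho>} (\<lambda>r. c * (u r t * f r))
      \<le> 2 * pi * integral {-\<rho>..\<rho>} (\<lambda>r. Rflow f u r t * (u r t * f r))"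
    using assms continuous_on_slice_snd[OF Rflow_continuous, of t] by (intro weighted_integrals_le) auto
  then show ?thesis
    unfolding constant_weighted_average[OF assms(1)] rbar_eq_integral[OF assms(1)] .
qed

lemma rbar_le_SUP:
  assumes "t \<ge> 0"
  shows "rbar \<rho> f u t \<le> (SUP r\<in>{-\<rho>..\<rho>}. Rflow f u r t)"
proof -
  have cR: "continuous_on {-\<rho>..\<rho>} (\<lambda>r. Rflow f u r t)"
    using continuous_on_slice_snd[OF Rflow_continuous] assms by simp
  then have "bdd_above ((\<lambda>r. Rflow f u r t) ` {-\<rho>..\<rho>})"
    by (intro bounded_imp_bdd_above compact_imp_bounded compact_continuous_image) auto
  then have "2 * pi * integral {-\<rho>..\<rho>} (\<lambda>r. Rflow f u r t * (u r t * f r))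
      \<le> 2 * pi * integral {-\<rho>..\<rho>} (\<lambda>r. (SUP r\<in>{-\<rho>..\<rho>}. Rflow f u r t) * (u r t * f r))"
    using assms cR by (intro weighted_integrals_le cSUP_upper) auto
  then show ?thesis
    unfolding constant_weighted_average[OF assms(1)] rbar_eq_integral[OF assms(1)] .
qed

lemma u_boundary_eq:
  assumes R_eq: "\<And>t. t \<ge> 0 \<Longrightarrow> Rflow f u \<rho> t = Rflow f u (-\<rho>) t" and "t \<ge> 0"
  shows "u \<rho> t = u (-\<rho>) t"
proof -
  have "(\<lambda>s. u \<rho> s / u (-\<rho>) s) t = (\<lambda>s. u \<rho> s / u (-\<rho>) s) 0"
  proof (rule DERIV_zero_within_imp_eq[where g = "\<lambda>s. u \<rho> s / u (-\<rho>) s"])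
    fix s assume s: "s \<in> {0..t}"
    have "((\<lambda>s. u \<rho> s / u (-\<rho>) s) has_real_derivative
        ((rbar \<rho> f u s - Rflow f u \<rho> s) * u \<rho> s * u (-\<rho>) s
         - u \<rho> s * ((rbar \<rho> f u s - Rflow f u (-\<rho>) s) * u (-\<rho>) s))
        / (u (-\<rho>) s * u (-\<rho>) s)) (at s within {0..t})"
      using s boundary_mem u_pos[of s "-\<rho>"]
      by (intro DERIV_divide DERIV_subset[OF u_time_derivative]) auto
    then show "((\<lambda>s. u \<rho> s / u (-\<rho>) s) has_real_derivative 0) (at s within {0..t})"
      using R_eq[of s] s by (simp add: algebra_simps)
  qed (use assms in auto)
  then show ?thesis using u_init boundary_mem u_pos[OF assms(2)] by simp
qed

lemma sqrt_phi_norm_over_u_has_derivative: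
  assumes "r \<in> {-\<rho>..\<rho>}" "s \<in> {0..\<tau>}"
  shows "((\<lambda>s. sqrt (phi_norm \<rho> f u s / u r s)) has_real_derivative
      Rflow f u r s * sqrt (phi_norm \<rho> f u s / u r s) / 2) (at s within {0..\<tau>})"
proof -
  let ?ph = "phi_norm \<rho> f u" and ?rb = "rbar \<rho> f u"
  have b: "u r s > 0" using u_pos assms by simp
  have y: "?ph s / u r s > 0" using b phi_norm_pos by simp
  have dq: "((\<lambda>s. ?ph s / u r s) has_real_derivative Rflow f u r s * (?ph s / u r s))
      (at s within {0..\<tau>})"
  proof -
    have "((\<lambda>s. ?ph s / u r s) has_real_derivative
        (?rb s * ?ph s * u r s - ?ph s * ((?rb s - Rflow f u r s) * u r s)) / (u r s * u r s))
        (at s within {0..\<tau>})"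
      using assms b by (intro DERIV_divide phi_norm_has_derivative DERIV_subset[OF u_time_derivative]) auto
    \<comment> \<open>the normalisation rate \<open>r(t)\<close> cancels, leaving \<open>\<partial>\<^sub>t log(\<phi>/u) = R\<close>\<close>
    moreover have "(?rb s * ?ph s * u r s - ?ph s * ((?rb s - Rflow f u r s) * u r s)) / (u r s * u r s)
        = Rflow f u r s * (?ph s / u r s)"
      using b by (simp add: field_simps)
    ultimately show ?thesis by simp
  qed
  have sqrt_rule: "inverse (sqrt q) / 2 * (c * q) = c * sqrt q / 2" if "q > 0" for q c :: real
    using real_div_sqrt[of q] that by (simp add: field_simps)
  from DERIV_chain2[OF DERIV_real_sqrt[OF y] dq] show ?thesis
    unfolding sqrt_rule[OF y] .
qed

lemma rbar_lower_bound:
  assumes C: "C > 0" and rbar_C: "\<And>t. t \<ge> 0 \<Longrightarrow> rbar \<rho> f u t = C * sqrt (u \<rho> t / phi_norm \<rho> f u t)"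
    and min_R: "\<And>t r. t \<ge> 0 \<Longrightarrow> r \<in> {-\<rho>..\<rho>} \<Longrightarrow> Rflow f u \<rho> t \<le> Rflow f u r t"
    and "\<tau> \<ge> 0"
  shows "2 / (\<tau> + 2 / C) \<le> rbar \<rho> f u \<tau>"
proof -
  define z where "z s = sqrt (phi_norm \<rho> f u s / u \<rho> s)" for s
  have z_pos: "z s > 0" if "s \<ge> 0" for s
    using u_pos[OF that boundary_mem(1)] phi_norm_pos by (simp add: z_def)
  have rbar_z: "rbar \<rho> f u s * z s = C" if "s \<ge> 0" for s
    using rbar_C[OF that] u_pos[OF that boundary_mem(1)] phi_norm_pos[of s]
    by (simp add: z_def real_sqrt_mult[symmetric])
  have "z \<tau> \<le> z 0 + C / 2 * \<tau>"
  proof (rule DERIV_le_within_imp_linear_bound[OF \<open>\<tau> \<ge> 0\<close>])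
    fix s assume s: "s \<in> {0..\<tau>}"
    show "(z has_real_derivative Rflow f u \<rho> s * z s / 2) (at s within {0..\<tau>})"
      unfolding z_def[abs_def] using sqrt_phi_norm_over_u_has_derivative[OF boundary_mem(1) s] .
    have "Rflow f u \<rho> s \<le> rbar \<rho> f u s"
      using s min_R by (intro lower_bound_le_rbar) auto
    then have "Rflow f u \<rho> s * z s \<le> rbar \<rho> f u s * z s"
      using z_pos[of s] s by (intro mult_right_mono) auto
    then show "Rflow f u \<rho> s * z s / 2 \<le> C / 2"
      using rbar_z[of s] s by simp
  qed
  moreover have "z 0 = 1" using u_init[OF boundary_mem(1)] by (simp add: z_def phi_norm_def)
  ultimately have "C / (1 + C * \<tau> / 2) \<le> C / z \<tau>"
    using C z_pos[OF \<open>\<tau> \<ge> 0\<close>] by (intro divide_left_mono) auto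
  moreover have "2 / (\<tau> + 2 / C) = C / (1 + C * \<tau> / 2)"
    using C \<open>\<tau> \<ge> 0\<close> by (simp add: field_simps)
  ultimately have "2 / (\<tau> + 2 / C) \<le> C / z \<tau>" by simp
  also have "C / z \<tau> = rbar \<rho> f u \<tau>"
    using rbar_z[OF \<open>\<tau> \<ge> 0\<close>] z_pos[OF \<open>\<tau> \<ge> 0\<close>] by (simp add: field_simps)
  finally show ?thesis .
qed

end

theorem theorem4p5:
  fixes \<rho> :: real and f :: "real \<Rightarrow> real" and u :: "real \<Rightarrow> real \<Rightarrow> real"
  assumes rho_pos: "\<rho> > 0"
    and f_smooth: "smooth_fun f"
    and f_pos: "\<forall>r\<in>{-\<rho>..\<rho>}. f r > 0"
    and area1: "rs_area E0 (G0 f) (-\<rho>) \<rho> = 1"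
    and R0_pos: "\<forall>r\<in>{-\<rho>..\<rho>}. rs_scalar E0 (G0 f) r > 0"
    and k0_nonpos: "rs_bdry_k_left \<rho> E0 (G0 f) \<le> 0" "rs_bdry_k_right \<rho> E0 (G0 f) \<le> 0"
    and k0_neg: "rs_bdry_k_left \<rho> E0 (G0 f) < 0 \<or> rs_bdry_k_right \<rho> E0 (G0 f) < 0"
    and flow: "normalised_flow \<rho> f u"
    and min_bdry: "\<forall>t\<ge>0. \<forall>r\<in>{-\<rho>..\<rho>}.
                     Rflow f u (-\<rho>) t \<le> Rflow f u r t \<and> Rflow f u \<rho> t \<le> Rflow f u r t"
  shows "\<exists>c2>0. \<forall>t\<ge>0. (SUP r\<in>{-\<rho>..\<rho>}. Rflow f u r t) \<ge> 2 / (t + c2)"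
proof -
  interpret rs_normalised_flow \<rho> f u
    using assms by unfold_locales
  have R_bdry_eq: "Rflow f u \<rho> t = Rflow f u (-\<rho>) t" if "t \<ge> 0" for t
    using min_bdry that boundary_mem by (meson antisym)
  have "f \<rho> > 0" "f (-\<rho>) > 0"
    using f_pos_at boundary_mem by auto
  then have "deriv f \<rho> \<le> 0" "deriv f (-\<rho>) \<ge> 0" "deriv f \<rho> < 0 \<or> deriv f (-\<rho>) > 0"
    using k0_nonpos k0_neg geod_curv_init boundary_mem
    by (auto simp: rs_bdry_k_left_def rs_bdry_k_right_def divide_le_0_iff zero_le_divide_iff
        divide_less_0_iff zero_less_divide_iff)
  define C where "C = -4 * pi * (deriv f \<rho> - deriv f (-\<rho>))"
  have "deriv f \<rho> - deriv f (-\<rho>) < 0"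
    using \<open>deriv f \<rho> \<le> 0\<close> \<open>deriv f (-\<rho>) \<ge> 0\<close> \<open>deriv f \<rho> < 0 \<or> deriv f (-\<rho>) > 0\<close> by linarith
  then have "C > 0"
    by (simp add: C_def mult_pos_neg[OF pi_gt_zero])
  moreover have "rbar \<rho> f u t = C * sqrt (u \<rho> t / phi_norm \<rho> f u t)" if "t \<ge> 0" for t
    using rbar_eq_flux[OF that] flux_boundary[OF that] u_boundary_eq[OF R_bdry_eq that]
    by (simp add: C_def real_sqrt_divide algebra_simps)
  ultimately have "2 / (t + 2 / C) \<le> (SUP r\<in>{-\<rho>..\<rho>}. Rflow f u r t)" if "t \<ge> 0" for t
    using rbar_lower_bound[of C] rbar_le_SUP min_bdry that by (meson order_trans)
  then show ?thesis
    using \<open>C > 0\<close> by (intro exI[of _ "2 / C"]) auto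
qed

end
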